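(* Let $S = R\cup B$ be a finite set of points in the plane in general position (no three collinear), colored red ($R$) and blue ($B$). If the boundaries of the convex hulls $CH(R)$ and $CH(B)$ intersect each other, then $S$ contains a balanced convex $4$-hole.
   Context: A $4$-hole of $S$ is a simple quadrilateral with vertices in $S$ and no point of $S$ in its interior; it is convex if the quadrilateral is convex, and balanced if it has exactly two red and two blue vertices. $CH(X)$ denotes the convex hull of $X$. *)

theory Defs
  imports "HOL-Analysis.Analysis"
begin

type_synonym point = "real^2"

definition general_position :: "point set \<Rightarrow> bool" where
  "general_position S \<longleftrightarrow>
     (\<forall>a\<in>S. \<forall>b\<in>S. \<forall>c\<in>S. a \<noteq> b \<and> a \<noteq> c \<and> b \<noteq> c \<longrightarrow> \<not> collinear {a, b, c})"

text \<open>Four distinct points in convex position: no one lies in the convex hull of the others.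
  They are then the vertices of a convex quadrilateral, whose region is their convex hull.\<close>
definition convex_quadrilateral :: "point \<Rightarrow> point \<Rightarrow> point \<Rightarrow> point \<Rightarrow> bool" where
  "convex_quadrilateral a b c d \<longleftrightarrow>
     card {a, b, c, d} = 4 \<and>
     (\<forall>p\<in>{a, b, c, d}. p \<notin> convex hull ({a, b, c, d} - {p}))"

definition convex_4hole :: "point set \<Rightarrow> point \<Rightarrow> point \<Rightarrow> point \<Rightarrow> point \<Rightarrow> bool" where
  "convex_4hole S a b c d \<longleftrightarrow>
     {a, b, c, d} \<subseteq> S \<and> convex_quadrilateral a b c d \<and>
     S \<inter> interior (convex hull {a, b, c, d}) = {}"

definition balanced :: "point set \<Rightarrow> point set \<Rightarrow> point \<Rightarrow> point \<Rightarrow> point \<Rightarrow> point \<Rightarrow> bool" where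
  "balanced R B a b c d \<longleftrightarrow> card ({a, b, c, d} \<inter> R) = 2 \<and> card ({a, b, c, d} \<inter> B) = 2"

end

theory Submission
  imports Defs
begin

text \<open>If the frontiers of the two hulls meet at a point x, then x lies on a red segment ab and on a
  blue segment cd, and by general position these two segments cross properly. Among all pairs of
  a red and a blue segment that cross, choose one whose quadrilateral (the convex hull of its four
  endpoints, which are in convex position) contains the fewest points of S in its interior. If a
  point p lay inside, say red, then ap or bp would still cross cd, giving a crossing pair with
  strictly fewer interior points. Hence the minimal quadrilateral is a balanced convex 4-hole.\<close>

definition orient :: "point \<Rightarrow> point \<Rightarrow> point \<Rightarrow> real" where
  "orient a b c = (b$1 - a$1) * (c$2 - a$2) - (b$2 - a$2) * (c$1 - a$1)"

lemma orient_add_scaleR: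
  "orient a b (x + t *\<^sub>R (y - x)) = orient a b x + t * (orient a b y - orient a b x)"
  by (simp add: orient_def algebra_simps)

lemma orient_convex_comb:
  "orient a b ((1 - t) *\<^sub>R x + t *\<^sub>R y) = (1 - t) * orient a b x + t * orient a b y"
  by (simp add: orient_def algebra_simps)

lemma orient_degenerate [simp]: "orient a a c = 0" "orient a b a = 0" "orient a b b = 0"
  by (simp_all add: orient_def)

lemma orient_swap12: "orient b a c = - orient a b c"
  by (simp add: orient_def algebra_simps)

lemma orient_swap23: "orient a c b = - orient a b c"
  by (simp add: orient_def algebra_simps)

lemma orient_rotate: "orient b c a = orient a b c"
  by (simp add: orient_def algebra_simps)

lemma orient_four_points: "orient b c d - orient a c d + orient a b d - orient a b c = 0"
  by (simp add: orient_def algebra_simps)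

lemma orient_eq_0_imp_on_line:
  assumes "orient a b z = 0" and "a \<noteq> b"
  obtains t where "z = a + t *\<^sub>R (b - a)"
proof -
  have det: "(b$1 - a$1) * (z$2 - a$2) = (b$2 - a$2) * (z$1 - a$1)"
    using assms(1) by (simp add: orient_def)
  consider "b$1 \<noteq> a$1" | "b$2 \<noteq> a$2"
    using assms(2) by (auto simp: vec_eq_iff forall_2)
  then show thesis
  proof cases
    case 1
    define t where "t = (z$1 - a$1) / (b$1 - a$1)"
    have "z$1 - a$1 = t * (b$1 - a$1)" "z$2 - a$2 = t * (b$2 - a$2)"
      using 1 det by (simp_all add: t_def field_simps)
    then have "z = a + t *\<^sub>R (b - a)"
      by (simp add: vec_eq_iff forall_2 algebra_simps)
    then show thesis by (rule that)
  next
    case 2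
    define t where "t = (z$2 - a$2) / (b$2 - a$2)"
    have "z$1 - a$1 = t * (b$1 - a$1)" "z$2 - a$2 = t * (b$2 - a$2)"
      using 2 det by (simp_all add: t_def field_simps)
    then have "z = a + t *\<^sub>R (b - a)"
      by (simp add: vec_eq_iff forall_2 algebra_simps)
    then show thesis by (rule that)
  qed
qed

lemma collinear_if_orient_eq_0:
  assumes "orient a b c = 0"
  shows "collinear {a, b, c}"
proof (cases "a = b")
  case True
  then show ?thesis by (simp add: collinear_2)
next
  case False
  then obtain t where "c = a + t *\<^sub>R (b - a)"
    using orient_eq_0_imp_on_line assms by blast
  then show ?thesis
    unfolding collinear_alt
    by (intro exI[of _ a] exI[of _ "b - a"]) (auto intro: exI[of _ 0] exI[of _ 1] exI[of _ t])
qed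

lemma general_position_orient_nonzero:
  assumes "general_position S" "a \<in> S" "b \<in> S" "c \<in> S" "a \<noteq> b" "a \<noteq> c" "b \<noteq> c"
  shows "orient a b c \<noteq> 0"
  using assms collinear_if_orient_eq_0 unfolding general_position_def by blast

lemma general_position_subset: "general_position S \<Longrightarrow> T \<subseteq> S \<Longrightarrow> general_position T"
  unfolding general_position_def by blast

lemma convex_orient_halfplane: "convex {y. 0 \<le> k * orient e f y}"
  unfolding convex_alt
  by (auto simp: orient_convex_comb distrib_left mult.left_commute[of k] intro!: add_nonneg_nonneg)

lemma interior_orient_halfplane:
  assumes "k \<noteq> 0" and "e \<noteq> f"
  shows "interior {y. 0 \<le> k * orient e f y} = {y. 0 < k * orient e f y}"
proof -
  define n :: point where "n = k *\<^sub>R vector [e$2 - f$2, f$1 - e$1]"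
  have linear: "k * orient e f y = inner n y - inner n e" for y
    by (simp add: n_def orient_def inner_vec_def sum_2 algebra_simps)
  have "n \<noteq> 0"
    using assms by (auto simp: n_def vec_eq_iff forall_2)
  then show ?thesis
    unfolding linear using interior_halfspace_ge[of n "inner n e"]
    by (simp add: le_diff_eq less_diff_eq)
qed

lemma same_sign_interpolation_nonzero:
  fixes X Y t :: real
  assumes "0 < X * Y" "0 \<le> t" "t \<le> 1"
  shows "(1 - t) * X + t * Y \<noteq> 0"
  using assms by (smt (verit, ccfv_SIG) mult_less_0_iff zero_less_mult_iff)

lemma convex_comb_orient_opposite_signs:
  assumes "x = (1 - s) *\<^sub>R a + s *\<^sub>R b" "0 \<le> s" "s \<le> 1" "orient e f x = 0"
    "orient e f a \<noteq> 0" "orient e f b \<noteq> 0"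
  shows "orient e f a * orient e f b < 0"
proof (rule ccontr)
  assume "\<not> ?thesis"
  then have "0 < orient e f a * orient e f b"
    using assms(5,6) by (metis linorder_neqE_linordered_idom mult_eq_0_iff)
  then show False
    using same_sign_interpolation_nonzero assms(1-4) by (auto simp: orient_convex_comb)
qed

definition crossing :: "point \<Rightarrow> point \<Rightarrow> point \<Rightarrow> point \<Rightarrow> bool" where
  "crossing a b c d \<longleftrightarrow> orient a b c * orient a b d < 0 \<and> orient c d a * orient c d b < 0"

lemma crossing_swap12: "crossing a b c d \<Longrightarrow> crossing b a c d"
  by (simp add: crossing_def orient_swap12[of b a] mult.commute)

lemma crossing_swap34: "crossing a b c d \<Longrightarrow> crossing a b d c"
  by (simp add: crossing_def orient_swap12[of d c] mult.commute)

lemma crossing_commute: "crossing a b c d \<Longrightarrow> crossing c d a b"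
  by (simp add: crossing_def)

lemma crossing_distinct:
  assumes "crossing a b c d"
  shows "a \<noteq> b" "c \<noteq> d" "a \<noteq> c" "a \<noteq> d" "b \<noteq> c" "b \<noteq> d"
  using assms by (auto simp: crossing_def)

text \<open>The endpoints of two crossing segments are the vertices of the quadrilateral a c b d;
  in particular ac is one of its edges.\<close>
lemma crossing_edge_same_side:
  assumes "crossing a b c d"
  shows "0 < orient a c b * orient a c d"
proof -
  have "orient c d b - orient c d a + orient a b d - orient a b c = 0"
    using orient_four_points[of b c d a] by (simp add: orient_rotate)
  moreover have "orient a c b = - orient a b c" "orient a c d = orient c d a"
    by (rule orient_swap23, rule orient_rotate[symmetric])
  moreover have "orient a b c * orient a b d < 0" "orient c d a * orient c d b < 0"
    using assms by (auto simp: crossing_def)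
  ultimately show ?thesis
    by (auto simp: mult_less_0_iff zero_less_mult_iff)
qed

lemma convex_hull_crossing_subset_halfplane:
  assumes "crossing a b c d"
  shows "convex hull {a, b, c, d} \<subseteq> {y. 0 \<le> orient a c b * orient a c y}"
  using crossing_edge_same_side[OF assms] convex_orient_halfplane
  by (intro hull_minimal) auto

lemma crossing_vertex_not_interior:
  assumes "crossing a b c d"
  shows "a \<notin> interior (convex hull {a, b, c, d})"
proof
  assume "a \<in> interior (convex hull {a, b, c, d})"
  then have "a \<in> interior {y. 0 \<le> orient a c b * orient a c y}"
    using interior_mono[OF convex_hull_crossing_subset_halfplane[OF assms]] by blast
  moreover have "orient a c b \<noteq> 0"
    using crossing_edge_same_side[OF assms] by auto
  ultimately show False
    using interior_orient_halfplane crossing_distinct[OF assms] by auto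
qed

lemma crossing_vertices_not_interior:
  assumes "crossing a b c d"
  shows "{a, b, c, d} \<inter> interior (convex hull {a, b, c, d}) = {}"
proof -
  have "{b, a, c, d} = {a, b, c, d}" "{c, d, a, b} = {a, b, c, d}" "{d, c, a, b} = {a, b, c, d}"
    by auto
  then show ?thesis
    using crossing_vertex_not_interior[OF assms]
      crossing_vertex_not_interior[OF crossing_swap12[OF assms]]
      crossing_vertex_not_interior[OF crossing_commute[OF assms]]
      crossing_vertex_not_interior[OF crossing_swap12[OF crossing_commute[OF assms]]]
    by auto
qed

lemma opposite_side_not_in_convex_hull_triangle:
  assumes "orient e f y * orient e f x < 0"
  shows "x \<notin> convex hull {y, e, f}"
proof
  assume "x \<in> convex hull {y, e, f}"
  moreover have "convex hull {y, e, f} \<subseteq> {z. 0 \<le> orient e f y * orient e f z}"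
    by (rule hull_minimal) (auto simp: convex_orient_halfplane)
  ultimately show False
    using assms by auto
qed

lemma crossing_convex_quadrilateral:
  assumes "crossing a b c d"
  shows "convex_quadrilateral a b c d"
proof -
  note distinct = crossing_distinct[OF assms]
  have "orient a b c * orient a b d < 0" "orient c d a * orient c d b < 0"
    using assms by (auto simp: crossing_def)
  then have "a \<notin> convex hull {b, c, d}" "b \<notin> convex hull {a, c, d}"
    "c \<notin> convex hull {d, a, b}" "d \<notin> convex hull {c, a, b}"
    using opposite_side_not_in_convex_hull_triangle[of c d b a]
      opposite_side_not_in_convex_hull_triangle[of c d a b]
      opposite_side_not_in_convex_hull_triangle[of a b d c]
      opposite_side_not_in_convex_hull_triangle[of a b c d]
    by (simp_all add: mult.commute)
  moreover have "{d, a, b} = {a, b, d}" "{c, a, b} = {a, b, c}"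
    "{a, b, c, d} - {a} = {b, c, d}" "{a, b, c, d} - {b} = {a, c, d}"
    "{a, b, c, d} - {c} = {a, b, d}" "{a, b, c, d} - {d} = {a, b, c}"
    using distinct by auto
  ultimately show ?thesis
    using distinct unfolding convex_quadrilateral_def by auto
qed

lemma crossing_hull_meets_line_in_segment:
  assumes cross: "crossing a b c d" and z: "z \<in> convex hull {a, b, c, d}" "orient c d z = 0"
  shows "z \<in> closed_segment c d"
proof -
  obtain t where t: "z = c + t *\<^sub>R (d - c)"
    using orient_eq_0_imp_on_line[OF z(2) crossing_distinct(2)[OF cross]] by blast
  have "0 \<le> orient a c b * orient a c z" "0 < orient a c b * orient a c d"
    using convex_hull_crossing_subset_halfplane[OF cross] z(1) crossing_edge_same_side[OF cross]
    by auto
  moreover have "orient a c z = t * orient a c d"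
    unfolding t orient_add_scaleR by simp
  ultimately have "0 \<le> t * (orient a c b * orient a c d)" "0 < orient a c b * orient a c d"
    by (simp_all add: mult_ac)
  then have "0 \<le> t"
    by (simp add: zero_le_mult_iff)
  have cross': "crossing a b d c"
    by (rule crossing_swap34[OF cross])
  have "{a, b, d, c} = {a, b, c, d}" by auto
  then have "0 \<le> orient a d b * orient a d z" "0 < orient a d b * orient a d c"
    using convex_hull_crossing_subset_halfplane[OF cross'] z(1) crossing_edge_same_side[OF cross']
    by auto
  moreover have "orient a d z = (1 - t) * orient a d c"
    unfolding t orient_add_scaleR by (simp add: algebra_simps)
  ultimately have "0 \<le> (1 - t) * (orient a d b * orient a d c)" "0 < orient a d b * orient a d c"
    by (simp_all add: mult_ac)
  then have "t \<le> 1"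
    by (simp add: zero_le_mult_iff)
  with \<open>0 \<le> t\<close> show ?thesis
    unfolding in_segment t by (auto intro!: exI[of _ t] simp: algebra_simps)
qed

text \<open>Replacing a by a point p of the quadrilateral on the same side of cd keeps the crossing:
  the segment pb meets line cd inside the quadrilateral, hence on the segment cd.\<close>
lemma crossing_replace_vertex_same_side:
  assumes cross: "crossing a b c d" and p: "p \<in> convex hull {a, b, c, d}"
    and side: "0 < orient c d p * orient c d a"
    and nonzero: "orient p b c \<noteq> 0" "orient p b d \<noteq> 0"
  shows "crossing p b c d"
proof -
  have pb: "orient c d p * orient c d b < 0"
    using side cross by (auto simp: crossing_def mult_less_0_iff zero_less_mult_iff)
  then have denominator: "orient c d p - orient c d b \<noteq> 0"
    by auto
  define s where "s = orient c d p / (orient c d p - orient c d b)"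
  have "0 \<le> s" "s \<le> 1"
    using pb unfolding s_def by (auto simp: mult_less_0_iff divide_simps)
  define z where "z = (1 - s) *\<^sub>R p + s *\<^sub>R b"
  have "z \<in> convex hull {a, b, c, d}"
    using convex_convex_hull[of "{a, b, c, d}"] p hull_inc[of b "{a, b, c, d}"] \<open>0 \<le> s\<close> \<open>s \<le> 1\<close>
    unfolding z_def convex_alt by blast
  moreover have "orient c d z = 0"
    using denominator unfolding z_def orient_convex_comb by (simp add: s_def field_simps)
  ultimately have "z \<in> closed_segment c d"
    by (rule crossing_hull_meets_line_in_segment[OF cross])
  then obtain t where "z = (1 - t) *\<^sub>R c + t *\<^sub>R d" "0 \<le> t" "t \<le> 1"
    by (auto simp: in_segment)
  moreover have "orient p b z = 0"
    by (simp add: z_def orient_convex_comb)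
  ultimately have "orient p b c * orient p b d < 0"
    using convex_comb_orient_opposite_signs nonzero by blast
  with pb show ?thesis
    by (simp add: crossing_def)
qed

lemma crossing_replace_vertex:
  assumes gp: "general_position S" and cross: "crossing a b c d" and sub: "{a, b, c, d} \<subseteq> S"
    and p: "p \<in> S" "p \<in> interior (convex hull {a, b, c, d})"
  shows "crossing p b c d \<or> crossing a p c d"
proof -
  have p_ne: "p \<noteq> a" "p \<noteq> b" "p \<noteq> c" "p \<noteq> d"
    using crossing_vertices_not_interior[OF cross] p(2) by auto
  note distinct = crossing_distinct[OF cross]
  have p_hull: "p \<in> convex hull {a, b, c, d}"
    using p(2) interior_subset by blast
  have orient_nonzero: "orient x y p \<noteq> 0" "orient p x y \<noteq> 0"
    if "x \<in> {a, b, c, d}" "y \<in> {a, b, c, d}" "x \<noteq> y" for x y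
    using general_position_orient_nonzero[OF gp] that sub p(1) p_ne by auto
  have "orient c d a * orient c d b < 0"
    using cross by (simp add: crossing_def)
  moreover have "orient c d p \<noteq> 0"
    using orient_nonzero(1)[of c d] distinct by simp
  ultimately consider "0 < orient c d p * orient c d a" | "0 < orient c d p * orient c d b"
    by (smt (verit) mult_less_0_iff zero_less_mult_iff)
  then show ?thesis
  proof cases
    case 1
    then show ?thesis
      using crossing_replace_vertex_same_side[OF cross p_hull] orient_nonzero(2) distinct by simp
  next
    case 2
    have "{b, a, c, d} = {a, b, c, d}" by auto
    then have "crossing p a c d"
      using crossing_replace_vertex_same_side[OF crossing_swap12[OF cross] _ 2] p_hull
        orient_nonzero(2) distinct by simp
    then show ?thesis
      using crossing_swap12 by blast
  qed
qed

definition bichromatic_crossing ::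
    "point set \<Rightarrow> point set \<Rightarrow> point \<Rightarrow> point \<Rightarrow> point \<Rightarrow> point \<Rightarrow> bool" where
  "bichromatic_crossing R B a b c d \<longleftrightarrow>
     a \<in> R \<and> b \<in> R \<and> c \<in> B \<and> d \<in> B \<and> crossing a b c d"

lemma bichromatic_crossing_through_interior_point:
  assumes gp: "general_position (R \<union> B)" and cross: "bichromatic_crossing R B a b c d"
    and p: "p \<in> R \<union> B" "p \<in> interior (convex hull {a, b, c, d})"
  obtains a' b' c' d' where "bichromatic_crossing R B a' b' c' d'" "p \<in> {a', b', c', d'}"
    "{a', b', c', d'} \<subseteq> convex hull {a, b, c, d}"
proof -
  have colours: "a \<in> R" "b \<in> R" "c \<in> B" "d \<in> B" and "crossing a b c d"
    using cross by (auto simp: bichromatic_crossing_def)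
  have sub: "{a, b, c, d} \<subseteq> R \<union> B" "{c, d, a, b} \<subseteq> R \<union> B"
    using colours by auto
  have hull: "{a, b, c, d} \<subseteq> convex hull {a, b, c, d}" "p \<in> convex hull {a, b, c, d}"
    using hull_subset[of "{a, b, c, d}" convex] p(2) interior_subset by auto
  have "{c, d, a, b} = {a, b, c, d}" by auto
  then have p': "p \<in> interior (convex hull {c, d, a, b})"
    using p(2) by simp
  consider "p \<in> R" | "p \<in> B"
    using p(1) by blast
  then show thesis
  proof cases
    case 1
    from crossing_replace_vertex[OF gp \<open>crossing a b c d\<close> sub(1) p] show thesis
    proof
      assume "crossing p b c d"
      then show thesis
        using that[of p b c d] colours 1 hull by (simp add: bichromatic_crossing_def)
    next
      assume "crossing a p c d"
      then show thesis
        using that[of a p c d] colours 1 hull by (simp add: bichromatic_crossing_def)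
    qed
  next
    case 2
    from crossing_replace_vertex[OF gp crossing_commute[OF \<open>crossing a b c d\<close>] sub(2) p(1) p']
    show thesis
    proof
      assume "crossing p d a b"
      then show thesis
        using that[of a b p d] crossing_commute[of p d a b] colours 2 hull
        by (simp add: bichromatic_crossing_def)
    next
      assume "crossing c p a b"
      then show thesis
        using that[of a b c p] crossing_commute[of c p a b] colours 2 hull
        by (simp add: bichromatic_crossing_def)
    qed
  qed
qed

lemma card_interior_points_decreases:
  assumes "finite S" "Q' \<subseteq> convex hull Q" "p \<in> Q'" "p \<in> S" "p \<in> interior (convex hull Q)"
    "Q' \<inter> interior (convex hull Q') = {}"
  shows "card (S \<inter> interior (convex hull Q')) < card (S \<inter> interior (convex hull Q))"
proof -
  have "interior (convex hull Q') \<subseteq> interior (convex hull Q)"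
    using assms(2) by (simp add: convex_hull_subset interior_mono)
  then have "S \<inter> interior (convex hull Q') \<subset> S \<inter> interior (convex hull Q)"
    using assms(3-6) by blast
  then show ?thesis
    using assms(1) by (simp add: psubset_card_mono)
qed

lemma empty_bichromatic_crossing_exists:
  assumes "finite (R \<union> B)" and gp: "general_position (R \<union> B)"
    and "bichromatic_crossing R B a b c d"
  shows "\<exists>a b c d. bichromatic_crossing R B a b c d \<and>
           (R \<union> B) \<inter> interior (convex hull {a, b, c, d}) = {}"
  using assms(3)
proof (induction "card ((R \<union> B) \<inter> interior (convex hull {a, b, c, d}))"
    arbitrary: a b c d rule: less_induct)
  case less
  show ?case
  proof (cases "(R \<union> B) \<inter> interior (convex hull {a, b, c, d}) = {}")
    case True
    with less.prems show ?thesis by blast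
  next
    case False
    then obtain p where p: "p \<in> R \<union> B" "p \<in> interior (convex hull {a, b, c, d})"
      by blast
    obtain a' b' c' d' where cross': "bichromatic_crossing R B a' b' c' d'"
      and p': "p \<in> {a', b', c', d'}" and hull: "{a', b', c', d'} \<subseteq> convex hull {a, b, c, d}"
      using bichromatic_crossing_through_interior_point[OF gp less.prems p] by blast
    have "{a', b', c', d'} \<inter> interior (convex hull {a', b', c', d'}) = {}"
      using cross' crossing_vertices_not_interior by (simp add: bichromatic_crossing_def)
    then have "card ((R \<union> B) \<inter> interior (convex hull {a', b', c', d'}))
        < card ((R \<union> B) \<inter> interior (convex hull {a, b, c, d}))"
      using card_interior_points_decreases[OF assms(1) hull p' p] by blast
    from less.hyps[OF this cross'] show ?thesis .
  qed
qed

lemma balanced_convex_4hole_if_empty_crossing: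
  assumes "R \<inter> B = {}" and cross: "bichromatic_crossing R B a b c d"
    and empty: "(R \<union> B) \<inter> interior (convex hull {a, b, c, d}) = {}"
  shows "convex_4hole (R \<union> B) a b c d \<and> balanced R B a b c d"
proof -
  have "{a, b, c, d} \<inter> R = {a, b}" "{a, b, c, d} \<inter> B = {c, d}"
    using assms(1) cross by (auto simp: bichromatic_crossing_def)
  then show ?thesis
    using cross empty crossing_convex_quadrilateral crossing_distinct
    by (auto simp: bichromatic_crossing_def convex_4hole_def balanced_def)
qed

lemma convex_comb_in_closed_segment:
  assumes "0 \<le> u" "0 \<le> v" "u + v = 1"
  shows "u *\<^sub>R a + v *\<^sub>R b \<in> closed_segment a b"
proof -
  have "u = 1 - v" "v \<le> 1"
    using assms by linarith+
  then show ?thesis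
    using assms(2) unfolding in_segment by blast
qed

lemma frontier_convex_hull_on_segment:
  assumes "finite R" and gp: "general_position R" and x: "x \<in> frontier (convex hull R)"
  obtains a b where "a \<in> R" "b \<in> R" "x \<in> closed_segment a b"
proof -
  have "closed (convex hull R)"
    using assms(1) by (simp add: compact_imp_closed compact_convex_hull finite_imp_compact)
  then have x_hull: "x \<in> convex hull R" and x_not_interior: "x \<notin> interior (convex hull R)"
    using x by (auto simp: frontier_def)
  obtain T where T: "finite T" "T \<subseteq> R" "card T \<le> 3" "x \<in> convex hull T"
    using x_hull caratheodory[of R] by auto
  have "card T \<noteq> 0"
    using T(1,4) by auto
  then have "card T = 1 \<or> card T = 2 \<or> card T = 3"
    using T(3) by linarith
  then consider (point) a where "T = {a}" | (segment) a b where "T = {a, b}" | (triangle) "card T = 3"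
    by (metis card_1_singletonE card_2_iff)
  then show thesis
  proof cases
    case (point a)
    then show thesis
      using that T(2,4) by auto
  next
    case (segment a b)
    then have "x \<in> closed_segment a b"
      using T(4) by (simp add: segment_convex_hull)
    then show thesis
      using that T(2) segment by blast
  next
    case triangle
    then obtain a b c where abc: "T = {a, b, c}" "a \<noteq> b" "b \<noteq> c" "a \<noteq> c"
      by (auto simp: card_3_iff)
    obtain u v w where uvw: "0 \<le> u" "0 \<le> v" "0 \<le> w" "u + v + w = 1"
      and x_eq: "x = u *\<^sub>R a + v *\<^sub>R b + w *\<^sub>R c"
      using T(4) unfolding abc convex_hull_3 by blast
    have "\<not> collinear {a, b, c}"
      using gp T(2) abc unfolding general_position_def by blast
    then have interior_3: "interior (convex hull {a, b, c}) =
        {v. \<exists>x y z. 0 < x \<and> 0 < y \<and> 0 < z \<and> x + y + z = 1 \<and> x *\<^sub>R a + y *\<^sub>R b + z *\<^sub>R c = v}"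
      by (rule interior_convex_hull_3_minimal) simp
    have "x \<notin> interior (convex hull {a, b, c})"
      using x_not_interior interior_mono[OF hull_mono[OF T(2)]] abc(1) by blast
    then have "\<not> (0 < u \<and> 0 < v \<and> 0 < w)"
      unfolding interior_3 mem_Collect_eq using x_eq uvw(4) by metis
    then consider "u = 0" | "v = 0" | "w = 0"
      using uvw(1-3) by linarith
    then show thesis
    proof cases
      case 1
      then have "x \<in> closed_segment b c"
        using x_eq uvw convex_comb_in_closed_segment[of v w b c] by simp
      then show thesis
        using that T(2) abc(1) by blast
    next
      case 2
      then have "x \<in> closed_segment a c"
        using x_eq uvw convex_comb_in_closed_segment[of u w a c] by simp
      then show thesis
        using that T(2) abc(1) by blast
    next
      case 3
      then have "x \<in> closed_segment a b"
        using x_eq uvw convex_comb_in_closed_segment[of u v a b] by simp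
      then show thesis
        using that T(2) abc(1) by blast
    qed
  qed
qed

lemma orient_closed_segment: "x \<in> closed_segment a b \<Longrightarrow> orient a b x = 0"
  by (auto simp: in_segment orient_convex_comb)

lemma crossing_if_closed_segments_meet:
  assumes gp: "general_position S" and S: "a \<in> S" "b \<in> S" "c \<in> S" "d \<in> S"
    and disjoint: "{a, b} \<inter> {c, d} = {}"
    and x: "x \<in> closed_segment a b" "x \<in> closed_segment c d"
  shows "crossing a b c d"
proof -
  have on_lines: "orient a b x = 0" "orient c d x = 0"
    using x by (simp_all add: orient_closed_segment)
  have distinct: "a \<noteq> c" "a \<noteq> d" "b \<noteq> c" "b \<noteq> d"
    using disjoint by auto
  note orient_nonzero = general_position_orient_nonzero[OF gp]
  have "a \<noteq> b"
  proof
    assume "a = b"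
    then have "x = a" using x(1) by simp
    then show False
      using x(2) on_lines(2) orient_nonzero[of c d a] S distinct by (cases "c = d") auto
  qed
  have "c \<noteq> d"
  proof
    assume "c = d"
    then have "x = c" using x(2) by simp
    then show False
      using on_lines(1) orient_nonzero[of a b c] S distinct \<open>a \<noteq> b\<close> by auto
  qed
  obtain s where s: "0 \<le> s" "s \<le> 1" "x = (1 - s) *\<^sub>R a + s *\<^sub>R b"
    using x(1) by (auto simp: in_segment)
  obtain t where t: "0 \<le> t" "t \<le> 1" "x = (1 - t) *\<^sub>R c + t *\<^sub>R d"
    using x(2) by (auto simp: in_segment)
  have "orient c d a * orient c d b < 0"
    using convex_comb_orient_opposite_signs[OF s(3,1,2) on_lines(2)]
      orient_nonzero[of c d a] orient_nonzero[of c d b] S distinct \<open>a \<noteq> b\<close> \<open>c \<noteq> d\<close> by auto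
  moreover have "orient a b c * orient a b d < 0"
    using convex_comb_orient_opposite_signs[OF t(3,1,2) on_lines(1)]
      orient_nonzero[of a b c] orient_nonzero[of a b d] S distinct \<open>a \<noteq> b\<close> \<open>c \<noteq> d\<close> by auto
  ultimately show ?thesis
    by (simp add: crossing_def)
qed

theorem lemma5:
  fixes R B :: "point set"
  assumes "finite R" and "finite B" and "R \<inter> B = {}"
    and "general_position (R \<union> B)"
    and "frontier (convex hull R) \<inter> frontier (convex hull B) \<noteq> {}"
  shows "\<exists>a b c d. convex_4hole (R \<union> B) a b c d \<and> balanced R B a b c d"
proof -
  obtain x where xR: "x \<in> frontier (convex hull R)" and xB: "x \<in> frontier (convex hull B)"
    using assms(5) by blast
  obtain a b where ab: "a \<in> R" "b \<in> R" "x \<in> closed_segment a b"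
    using frontier_convex_hull_on_segment[OF assms(1) _ xR] general_position_subset[OF assms(4)]
    by blast
  obtain c d where cd: "c \<in> B" "d \<in> B" "x \<in> closed_segment c d"
    using frontier_convex_hull_on_segment[OF assms(2) _ xB] general_position_subset[OF assms(4)]
    by blast
  have "crossing a b c d"
    using crossing_if_closed_segments_meet[OF assms(4) _ _ _ _ _ ab(3) cd(3)] ab cd assms(3)
    by blast
  then have "bichromatic_crossing R B a b c d"
    using ab cd by (simp add: bichromatic_crossing_def)
  then obtain a' b' c' d' where "bichromatic_crossing R B a' b' c' d'"
    "(R \<union> B) \<inter> interior (convex hull {a', b', c', d'}) = {}"
    using empty_bichromatic_crossing_exists assms(1,2,4) by blast
  then show ?thesis
    using balanced_convex_4hole_if_empty_crossing[OF assms(3)] by blast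
qed

end
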